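(* Let $n_0,n_1$ be positive integers with $\max\{n_0,n_1\}>1$ and let $r>1$ be an integer. Then every subset $\mathcal{Z}\subseteq\{1,2,\dots,r-1\}$ is admissible for $(n_0,n_1,r)$.
   Context: For integers $n,\ell>0$ and a finite-support integer sequence $\mu=(\mu_i)_{i\ge1}$, $\mathsf{K}_\ell(\mu,n)=n^\ell-\sum_{i=1}^{\ell}\mu_i n^{\ell-i}$ (with $0^0=1$). For a pair $(\eta,\omega)$ of nonnegative integer sequences $(\eta_\ell)_{\ell\ge1},(\omega_\ell)_{\ell\ge1}$ with finite support, let $\mathsf{K}^\pm_\ell=\mathsf{K}_\ell(\eta\pm\omega,n_0\pm n_1)$, let $\mathsf{r}(\eta,\omega)$ be the largest index in the union of their supports, and $\mathsf{K}^\pm=\mathsf{K}^\pm_{\mathsf{r}(\eta,\omega)}$. A subset $\mathcal{Z}\subseteq\{1,\dots,r-1\}$ is admissible for $(n_0,n_1,r)$ if there exists such a pair $(\eta,\omega)$ with $\mathsf{r}(\eta,\omega)=r$ and $\mathsf{K}^+=\mathsf{K}^-=0$ such that, for $\ell\in\{1,\dots,r-1\}$, the inequality $\mathsf{K}^+_\ell\ge|\mathsf{K}^-_\ell|$ fails exactly when $\ell\in\mathcal{Z}$. *)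

theory Defs
  imports Main
begin

text \<open>K_l(mu,n) = n^l - sum_{i=1}^l mu_i n^(l-i), integer-valued (0^0 = 1 in Isabelle).\<close>
definition Kf :: "nat \<Rightarrow> (nat \<Rightarrow> int) \<Rightarrow> int \<Rightarrow> int" where
  "Kf l mu n = n ^ l - (\<Sum>i = 1..l. mu i * n ^ (l - i))"

text \<open>Support of a sequence indexed by positive integers (index 0 is not part of the sequence).\<close>
definition supp_seq :: "(nat \<Rightarrow> nat) \<Rightarrow> nat set" where
  "supp_seq f = {i. 1 \<le> i \<and> f i \<noteq> 0}"

definition rk :: "(nat \<Rightarrow> nat) \<Rightarrow> (nat \<Rightarrow> nat) \<Rightarrow> nat" where
  "rk eta omega = Max (supp_seq eta \<union> supp_seq omega)"

definition Kplus :: "nat \<Rightarrow> nat \<Rightarrow> (nat \<Rightarrow> nat) \<Rightarrow> (nat \<Rightarrow> nat) \<Rightarrow> nat \<Rightarrow> int" where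
  "Kplus n0 n1 eta omega l = Kf l (\<lambda>i. int (eta i) + int (omega i)) (int n0 + int n1)"

definition Kminus :: "nat \<Rightarrow> nat \<Rightarrow> (nat \<Rightarrow> nat) \<Rightarrow> (nat \<Rightarrow> nat) \<Rightarrow> nat \<Rightarrow> int" where
  "Kminus n0 n1 eta omega l = Kf l (\<lambda>i. int (eta i) - int (omega i)) (int n0 - int n1)"

definition admissible :: "nat \<Rightarrow> nat \<Rightarrow> nat \<Rightarrow> nat set \<Rightarrow> bool" where
  "admissible n0 n1 r Z \<longleftrightarrow> Z \<subseteq> {1..r-1} \<and>
     (\<exists>eta omega.
        finite (supp_seq eta) \<and> finite (supp_seq omega) \<and>
        supp_seq eta \<union> supp_seq omega \<noteq> {} \<and>
        rk eta omega = r \<and>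
        Kplus n0 n1 eta omega r = 0 \<and> Kminus n0 n1 eta omega r = 0 \<and>
        (\<forall>l \<in> {1..r-1}. (\<not> (Kplus n0 n1 eta omega l \<ge> \<bar>Kminus n0 n1 eta omega l\<bar>)) \<longleftrightarrow> l \<in> Z))"

end

theory Submission
  imports Defs
begin

text \<open>Put N = n0 + n1, M = n0 - n1, P_l = K^+_l and Q_l = K^-_l. Since
  K_(l+1)(mu, n) = n K_l(mu, n) - mu_(l+1), choosing (eta, omega) supported in {1..r} amounts to
  choosing a walk (P_l, Q_l) starting at (1, 1) whose increments A_l = N P_(l-1) - P_l = eta_l + omega_l
  and B_l = M Q_(l-1) - Q_l = eta_l - omega_l satisfy |B_l| <= A_l and A_l = B_l (mod 2).
  For l < r we either scale, (P, Q) to (N P, M Q), which keeps P >= |Q|, or, when l is in Z, jump to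
  (S - 1, +-(S + 1)) with S = (N P + |M Q|) / 2, which makes P < |Q|; the last step goes to (0, 0).
  Because N - |M| >= 2, both moves preserve 1 <= P, |M| <= |M Q| <= N P and P = Q (mod 2), and this
  invariant makes every increment, the last one included, admissible.\<close>

lemma Kf_Suc: "Kf (Suc l) mu n = n * Kf l mu n - mu (Suc l)"
proof -
  have "(\<Sum>i = 1..Suc l. mu i * n ^ (Suc l - i)) = (\<Sum>i = 1..l. mu i * n ^ (Suc l - i)) + mu (Suc l)"
    by simp
  also have "(\<Sum>i = 1..l. mu i * n ^ (Suc l - i)) = n * (\<Sum>i = 1..l. mu i * n ^ (l - i))"
    unfolding sum_distrib_left by (rule sum.cong) (auto simp: Suc_diff_le)
  finally show ?thesis
    unfolding Kf_def by (simp add: algebra_simps)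
qed

lemma Kf_eq_path:
  assumes "X 0 = 1" and "\<And>i. i \<in> {1..l} \<Longrightarrow> mu i = n * X (i - 1) - X i"
  shows "Kf l mu n = X l"
  using assms(2)
proof (induction l)
  case 0
  show ?case using assms(1) by (simp add: Kf_def)
next
  case (Suc l)
  then show ?case by (simp add: Kf_Suc)
qed

lemma nat_half_sum_diff:
  fixes A B :: int
  assumes "\<bar>B\<bar> \<le> A" and "even (A - B)"
  shows "int (nat ((A + B) div 2)) + int (nat ((A - B) div 2)) = A"
    and "int (nat ((A + B) div 2)) - int (nat ((A - B) div 2)) = B"
proof -
  obtain d where d: "A - B = 2 * d" using assms(2) by (rule evenE)
  have "A + B = 2 * (d + B)" using d by simp
  moreover have "0 \<le> d" "0 \<le> d + B" using assms(1) d by (auto simp: abs_le_iff)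
  ultimately show "int (nat ((A + B) div 2)) + int (nat ((A - B) div 2)) = A"
    and "int (nat ((A + B) div 2)) - int (nat ((A - B) div 2)) = B"
    using d by simp_all
qed

fun admissible_step :: "int \<Rightarrow> int \<Rightarrow> int \<times> int \<Rightarrow> int \<times> int \<Rightarrow> bool" where
  "admissible_step N M (P, Q) (P', Q') \<longleftrightarrow>
     \<bar>M * Q - Q'\<bar> \<le> N * P - P' \<and> even ((N * P - P') - (M * Q - Q'))"

lemma admissibleI_path:
  fixes X Y :: "nat \<Rightarrow> int"
  assumes "0 < n0 + n1" and "0 < r" and "Z \<subseteq> {1..r-1}"
    and "X 0 = 1" and "Y 0 = 1" and "X r = 0" and "Y r = 0" and "0 < X (r - 1)"
    and steps: "\<And>l. l \<in> {1..r} \<Longrightarrow>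
      admissible_step (int n0 + int n1) (int n0 - int n1) (X (l - 1), Y (l - 1)) (X l, Y l)"
    and below_iff: "\<And>l. l \<in> {1..r-1} \<Longrightarrow> X l < \<bar>Y l\<bar> \<longleftrightarrow> l \<in> Z"
  shows "admissible n0 n1 r Z"
proof -
  define N where "N = int n0 + int n1"
  define M where "M = int n0 - int n1"
  define A where "A l = (if l \<in> {1..r} then N * X (l - 1) - X l else 0)" for l
  define B where "B l = (if l \<in> {1..r} then M * Y (l - 1) - Y l else 0)" for l
  define eta where "eta l = nat ((A l + B l) div 2)" for l
  define omega where "omega l = nat ((A l - B l) div 2)" for l
  have "\<bar>B l\<bar> \<le> A l \<and> even (A l - B l)" for l
    using steps[of l] unfolding A_def B_def N_def M_def by auto
  then have eta_omega: "int (eta l) + int (omega l) = A l" "int (eta l) - int (omega l) = B l" for l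
    unfolding eta_def omega_def using nat_half_sum_diff by blast+
  have K: "Kplus n0 n1 eta omega l = X l \<and> Kminus n0 n1 eta omega l = Y l" if "l \<le> r" for l
    unfolding Kplus_def Kminus_def eta_omega
    using that assms(4,5) by (auto intro!: Kf_eq_path simp: A_def B_def N_def M_def)
  have supp: "supp_seq eta \<union> supp_seq omega \<subseteq> {1..r}"
    unfolding supp_seq_def eta_def omega_def A_def B_def by auto
  have "0 < A r"
    using assms(1,2,6,8) unfolding A_def N_def by (auto simp: zero_less_mult_iff)
  then have r_supp: "r \<in> supp_seq eta \<union> supp_seq omega"
    using eta_omega(1)[of r] assms(2) unfolding supp_seq_def by auto
  have fin: "finite (supp_seq eta)" "finite (supp_seq omega)"
    using supp by (auto intro: finite_subset)
  have "rk eta omega = r"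
    unfolding rk_def by (rule Max_eqI) (use fin supp r_supp in auto)
  moreover have "Kplus n0 n1 eta omega r = 0" "Kminus n0 n1 eta omega r = 0"
    using K[of r] assms(6,7) by simp_all
  moreover have "\<forall>l \<in> {1..r-1}. \<not> Kplus n0 n1 eta omega l \<ge> \<bar>Kminus n0 n1 eta omega l\<bar> \<longleftrightarrow> l \<in> Z"
  proof
    fix l assume l: "l \<in> {1..r-1}"
    then show "\<not> Kplus n0 n1 eta omega l \<ge> \<bar>Kminus n0 n1 eta omega l\<bar> \<longleftrightarrow> l \<in> Z"
      using K[of l] below_iff[OF l] by auto
  qed
  ultimately show ?thesis
    unfolding admissible_def using assms(3) fin r_supp by blast
qed

fun grow_step :: "int \<Rightarrow> int \<Rightarrow> int \<times> int \<Rightarrow> int \<times> int" where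
  "grow_step N M (P, Q) = (N * P, M * Q)"

fun cross_step :: "int \<Rightarrow> int \<Rightarrow> int \<times> int \<Rightarrow> int \<times> int" where
  "cross_step N M (P, Q) =
     (let S = (N * P + \<bar>M * Q\<bar>) div 2 in (S - 1, if 0 \<le> M * Q then S + 1 else - (S + 1)))"

lemma admissible_step_grow: "admissible_step N M (P, Q) (grow_step N M (P, Q))"
  by simp

primrec walk :: "int \<Rightarrow> int \<Rightarrow> nat set \<Rightarrow> nat \<Rightarrow> int \<times> int" where
  "walk N M Z 0 = (1, 1)"
| "walk N M Z (Suc l) = (if Suc l \<in> Z then cross_step N M else grow_step N M) (walk N M Z l)"

fun walk_inv :: "int \<Rightarrow> int \<Rightarrow> int \<times> int \<Rightarrow> bool" where
  "walk_inv N M (P, Q) \<longleftrightarrow> 1 \<le> P \<and> \<bar>M\<bar> \<le> \<bar>M * Q\<bar> \<and> \<bar>M * Q\<bar> \<le> N * P \<and> even (P - Q)"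

locale walk_parameters =
  fixes N M :: int
  assumes N_ge_3: "3 \<le> N" and abs_M_le: "\<bar>M\<bar> + 2 \<le> N" and even_N_M: "even (N - M)"
begin

lemma walk_inv_even:
  assumes "walk_inv N M (P, Q)"
  shows "even (N * P - M * Q)"
proof -
  have "N * P - M * Q = (N - M) * P + M * (P - Q)"
    by (simp add: algebra_simps)
  then show ?thesis
    using assms even_N_M by simp
qed

lemma walk_inv_init: "walk_inv N M (1, 1)"
  using abs_M_le by simp

lemma cross_step_eq:
  assumes "walk_inv N M (P, Q)"
  obtains S where "2 * S = N * P + \<bar>M * Q\<bar>"
    and "cross_step N M (P, Q) = (S - 1, if 0 \<le> M * Q then S + 1 else - (S + 1))"
proof -
  have "even (N * P + \<bar>M * Q\<bar>)"
    using walk_inv_even[OF assms] by (cases "0 \<le> M * Q") (auto simp: abs_if)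
  then show ?thesis
    using that by (auto simp: Let_def elim!: evenE)
qed

lemma walk_inv_grow:
  assumes "walk_inv N M (P, Q)"
  shows "walk_inv N M (grow_step N M (P, Q))"
proof -
  have "\<bar>M\<bar> * \<bar>M * Q\<bar> \<le> N * (N * P)"
    using assms abs_M_le by (intro mult_mono) auto
  moreover have "\<bar>M\<bar> * 1 \<le> \<bar>M\<bar> * \<bar>M * Q\<bar>"
    using assms by (cases "M = 0") (auto intro!: mult_left_mono)
  moreover have "1 \<le> N * P"
    using assms N_ge_3 by (simp add: order_trans[OF _ mult_mono[of 1 N 1 P]])
  ultimately show ?thesis
    using walk_inv_even[OF assms] by (simp add: abs_mult mult.assoc)
qed

lemma walk_inv_cross:
  assumes "walk_inv N M (P, Q)"
  shows "walk_inv N M (cross_step N M (P, Q))"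
proof -
  obtain S where S: "2 * S = N * P + \<bar>M * Q\<bar>"
    and step: "cross_step N M (P, Q) = (S - 1, if 0 \<le> M * Q then S + 1 else - (S + 1))"
    using cross_step_eq[OF assms] .
  have "N \<le> N * P"
    using assms N_ge_3 by simp
  then have room: "N + \<bar>M\<bar> \<le> 2 * S"
    using assms S by simp
  have "2 * S \<le> (N - \<bar>M\<bar>) * S"
    using abs_M_le room by (intro mult_right_mono) auto
  then have "\<bar>M\<bar> * (S + 1) \<le> N * (S - 1)"
    using room by (simp add: algebra_simps)
  moreover have "\<bar>M\<bar> * 1 \<le> \<bar>M\<bar> * (S + 1)"
    using room N_ge_3 by (intro mult_left_mono) auto
  moreover have "1 < S"
    using room N_ge_3 by linarith
  ultimately show ?thesis
    unfolding step by (simp add: abs_mult add.commute)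
qed

lemma admissible_step_cross:
  assumes "walk_inv N M (P, Q)"
  shows "admissible_step N M (P, Q) (cross_step N M (P, Q))"
proof -
  obtain S where S: "2 * S = N * P + \<bar>M * Q\<bar>"
    and step: "cross_step N M (P, Q) = (S - 1, if 0 \<le> M * Q then S + 1 else - (S + 1))"
    using cross_step_eq[OF assms] .
  have "even (N * P - M * Q + 2)"
    using walk_inv_even[OF assms] by simp
  then show ?thesis
    using S assms unfolding step by (auto simp: abs_if algebra_simps)
qed

lemma admissible_step_to_zero:
  assumes "walk_inv N M (P, Q)"
  shows "admissible_step N M (P, Q) (0, 0)"
  using assms walk_inv_even[OF assms] by simp

lemma walk_inv_walk: "walk_inv N M (walk N M Z l)"
proof (induction l)
  case 0
  show ?case using walk_inv_init by simp
next
  case (Suc l)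
  obtain P Q where "walk N M Z l = (P, Q)" by fastforce
  with Suc show ?case
    using walk_inv_grow[of P Q] walk_inv_cross[of P Q] by (simp del: walk_inv.simps)
qed

lemma walk_admissible_step: "admissible_step N M (walk N M Z l) (walk N M Z (Suc l))"
proof -
  obtain P Q where "walk N M Z l = (P, Q)" by fastforce
  then show ?thesis
    using walk_inv_walk[of Z l] admissible_step_grow[of N M P Q] admissible_step_cross[of P Q]
    by (simp del: walk_inv.simps admissible_step.simps)
qed

lemma walk_below_iff: "fst (walk N M Z (Suc l)) < \<bar>snd (walk N M Z (Suc l))\<bar> \<longleftrightarrow> Suc l \<in> Z"
proof -
  obtain P Q where PQ: "walk N M Z l = (P, Q)" by fastforce
  then have inv: "walk_inv N M (P, Q)" using walk_inv_walk[of Z l] by simp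
  show ?thesis
  proof (cases "Suc l \<in> Z")
    case True
    obtain S where "2 * S = N * P + \<bar>M * Q\<bar>"
      and "cross_step N M (P, Q) = (S - 1, if 0 \<le> M * Q then S + 1 else - (S + 1))"
      using cross_step_eq[OF inv] .
    with True PQ inv show ?thesis by (auto simp del: cross_step.simps split: abs_split)
  next
    case False
    with PQ inv show ?thesis by (simp add: abs_mult)
  qed
qed

end

theorem mainTheorem8:
  fixes n0 n1 r :: nat and Z :: "nat set"
  assumes "0 < n0" and "0 < n1" and "max n0 n1 > 1" and "r > 1"
    and "Z \<subseteq> {1..r-1}"
  shows "admissible n0 n1 r Z"
proof -
  define N where "N = int n0 + int n1"
  define M where "M = int n0 - int n1"
  interpret walk_parameters N M
    by unfold_locales (use assms(1-3) in \<open>auto simp: N_def M_def\<close>)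
  define X where "X l = (if l < r then fst (walk N M Z l) else 0)" for l
  define Y where "Y l = (if l < r then snd (walk N M Z l) else 0)" for l
  have "admissible_step N M (X (l - 1), Y (l - 1)) (X l, Y l)" if "l \<in> {1..r}" for l
  proof (cases "l < r")
    case True
    then show ?thesis
      using that walk_admissible_step[of Z "l - 1"] by (auto simp: X_def Y_def)
  next
    case False
    then show ?thesis
      using that walk_inv_walk[of Z "l - 1"] admissible_step_to_zero
      by (cases "walk N M Z (l - 1)") (simp add: X_def Y_def)
  qed
  moreover have "X l < \<bar>Y l\<bar> \<longleftrightarrow> l \<in> Z" if "l \<in> {1..r-1}" for l
    using that walk_below_iff[of Z "l - 1"] by (auto simp: X_def Y_def)
  moreover have "0 < X (r - 1)"
    using walk_inv_walk[of Z "r - 1"] assms(4) by (cases "walk N M Z (r - 1)") (simp add: X_def)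
  ultimately show ?thesis
    using assms(1,4,5)
    by (intro admissibleI_path[of n0 n1 r Z X Y]) (auto simp: X_def Y_def N_def M_def)
qed

end
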